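(* Let $A$ be a generalized ring and let $\mathfrak a$ be an h-ideal of $A$ with $\mathfrak a=\sqrt{\mathfrak a}$, where $\sqrt{\mathfrak a}=\{a\in A_{[1]}:a^n\in\mathfrak a\text{ for some }n>0\}$. Then $V(\mathfrak a)$ is an irreducible subset of $spec(A)$ (with the Zariski topology) if and only if $\mathfrak a$ is prime.
   Context: All sets $X,Y,Z,W$ below are finite. A partial map $f:X\rightharpoonup Y$ is a map $f:D(f)\to Y$ defined on a subset $D(f)\subseteq X$; $Set_\bullet(X,Y)$ is the set of partial maps. $\mathbb F_\bullet$ is the category of finite sets with partial bijections; $f^t$ is the inverse. $[1]=\{1\}$, $c_X:X\to[1]$ the total map. A generalized ring $A$ consists of: a functor $X\mapsto A_X$ from $\mathbb F_\bullet$ to pointed sets with $A_\emptyset=\{0\}$; $A_f=\prod_{y\in Y}A_{f^{-1}(y)}$ for $f\in Set_\bullet(X,Y)$ (so $A_{c_X}=A_X$, $A_{id_X}=(A_{[1]})^X$); multiplications $\circ:A_Y\times A_f\to A_X$ and contractions $(\,,\,):A_X\times A_f\to A_Y$, zero when an argument is zero, extended fibrewise for $g\in Set_\bullet(Y,Z)$ to $\circ:A_g\times A_f\to A_{g\circ f}$, $(\,,\,):A_{g\circ f}\times A_f\to A_g$ via $(a\circ b)^{(z)}=a^{(z)}\circ b|_z$, $(c,b)^{(z)}=(c^{(z)},b|_z)$ ($b|_z=(b^{(y)})_{y\in g^{-1}(z)}$ for the restriction $f|_z:(g\circ f)^{-1}(z)\rightharpoonup g^{-1}(z)$); and a unit $1\in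 A_{[1]}$ (with transports $1_x$, and $1_f\in A_f$ for partial bijections $f$ with components $1_{f^t(y)}$ on the image, $0$ elsewhere); satisfying for $W\xleftarrow{h}Z\xleftarrow{g}Y\xleftarrow{f}X$: $d\circ(c\circ b)=(d\circ c)\circ b$; $(d,a\circ c)=((d,c),a)$ ($d\in A_{h\circ g\circ f},a\in A_g,c\in A_f$); $(d\circ c,a)=(d,(a,c))$ ($d\in A_{h\circ g},a\in A_{g\circ f},c\in A_f$); $(d\circ a,c)=d\circ(a,c)$ ($d\in A_h,a\in A_{g\circ f},c\in A_f$); for $Z\xrightarrow{g}Y\xleftarrow{f}X$, $h\in Set_\bullet(Y,W)$, $P=\{(z,x)\in D(g)\times D(f):g(z)=f(x)\}$ with projections $\tilde f,\tilde g$, $\tilde c^{(z)}=c^{(g(z))}$, $\tilde a^{(x)}=a^{(f(x))}$: $(d,c)\circ a=(d\circ\tilde a,\tilde c)$ ($d\in A_{h\circ f},a\in A_g,c\in A_f$); $a\circ1_{id_X}=1_{id_Y}\circ a=(a,1_{id_X})=a$ ($a\in A_f$); $a\circ1_{f^t}=(a,1_f)=f_A(a)$ ($a\in A_X$, $f$ a partial bijection). $A_{[1]}$ is a commutative monoid under $\circ$, powers $a^n$. An h-ideal is a subset $\mathfrak a\subseteq A_{[1]}$ with $(b\circ c,d)\in\mathfrak a$ for all finite $X$, $b,d\in A_X$, $c\in\mathfrak a^X\subseteq(A_{[1]})^X$; proper if $1\notin\mathfrak a$. A prime is a proper h-ideal $\mathfrak p$ with $a\circ b\in\mathfrak p\Rightarrow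 a\in\mathfrak p$ or $b\in\mathfrak p$; $spec(A)$ is the set of primes. $V(\mathfrak a)=\{\mathfrak p\in spec(A):\mathfrak p\supseteq\mathfrak a\}$; the Zariski topology has closed sets the $V(\mathfrak a)$, $\mathfrak a\subseteq A_{[1]}$. *)

theory Defs
  imports Main "HOL-Library.Nat_Bijection"
begin

text \<open>Finite sets are modelled as finite subsets of nat; a partial map X -> Y is
  a map f :: nat => nat option with dom f inside X and ran f inside Y.
  Elements of all the A_X live in a common type 'a.\<close>

record 'a gring =
  car :: "nat set \<Rightarrow> 'a set"
  zer :: "nat set \<Rightarrow> 'a"
  trn :: "nat set \<Rightarrow> nat set \<Rightarrow> (nat \<Rightarrow> nat option) \<Rightarrow> 'a \<Rightarrow> 'a"
  mul :: "nat set \<Rightarrow> nat set \<Rightarrow> (nat \<Rightarrow> nat option) \<Rightarrow> 'a \<Rightarrow> (nat \<Rightarrow> 'a) \<Rightarrow> 'a"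
  con :: "nat set \<Rightarrow> nat set \<Rightarrow> (nat \<Rightarrow> nat option) \<Rightarrow> 'a \<Rightarrow> (nat \<Rightarrow> 'a) \<Rightarrow> 'a"
  uni :: 'a

definition pmap :: "nat set \<Rightarrow> nat set \<Rightarrow> (nat \<Rightarrow> nat option) \<Rightarrow> bool" where
  "pmap X Y f \<longleftrightarrow> dom f \<subseteq> X \<and> ran f \<subseteq> Y"

definition pbij :: "nat set \<Rightarrow> nat set \<Rightarrow> (nat \<Rightarrow> nat option) \<Rightarrow> bool" where
  "pbij X Y f \<longleftrightarrow> pmap X Y f \<and> inj_on f (dom f)"

definition ptrans :: "(nat \<Rightarrow> nat option) \<Rightarrow> nat \<Rightarrow> nat option" where
  "ptrans f = (\<lambda>y. if \<exists>x. f x = Some y then Some (THE x. f x = Some y) else None)"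

definition idm :: "nat set \<Rightarrow> nat \<Rightarrow> nat option" where
  "idm X = (\<lambda>x. if x \<in> X then Some x else None)"

definition cmap :: "nat set \<Rightarrow> nat \<Rightarrow> nat option" where
  "cmap X = (\<lambda>x. if x \<in> X then Some (1::nat) else None)"

definition fib :: "nat set \<Rightarrow> (nat \<Rightarrow> nat option) \<Rightarrow> nat \<Rightarrow> nat set" where
  "fib X f y = {x \<in> X. f x = Some y}"

text \<open>A_f = prod_{y in Y} A_{f^{-1}(y)}, as extensional families.\<close>
definition fam :: "('a,'b) gring_scheme \<Rightarrow> nat set \<Rightarrow> nat set \<Rightarrow> (nat \<Rightarrow> nat option) \<Rightarrow> (nat \<Rightarrow> 'a) set" where
  "fam A X Y f = {b. (\<forall>y\<in>Y. b y \<in> car A (fib X f y)) \<and> (\<forall>y. y \<notin> Y \<longrightarrow> b y = undefined)}"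

definition zfam :: "('a,'b) gring_scheme \<Rightarrow> nat set \<Rightarrow> nat set \<Rightarrow> (nat \<Rightarrow> nat option) \<Rightarrow> nat \<Rightarrow> 'a" where
  "zfam A X Y f = (\<lambda>y. if y \<in> Y then zer A (fib X f y) else undefined)"

text \<open>identification A_X = A_{c_X} (family indexed by [1] = {1})\<close>
definition wrap :: "'a \<Rightarrow> nat \<Rightarrow> 'a" where
  "wrap a = (\<lambda>y. if y = (1::nat) then a else undefined)"

definition rfam :: "(nat \<Rightarrow> 'a) \<Rightarrow> nat set \<Rightarrow> nat \<Rightarrow> 'a" where
  "rfam b S = (\<lambda>y. if y \<in> S then b y else undefined)"

text \<open>fibrewise extensions: for a in A_g (g : Y -> Z), b in A_f (f : X -> Y)\<close>
definition mulF :: "('a,'b) gring_scheme \<Rightarrow> nat set \<Rightarrow> nat set \<Rightarrow> nat set \<Rightarrow> (nat \<Rightarrow> nat option)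
    \<Rightarrow> (nat \<Rightarrow> nat option) \<Rightarrow> (nat \<Rightarrow> 'a) \<Rightarrow> (nat \<Rightarrow> 'a) \<Rightarrow> nat \<Rightarrow> 'a" where
  "mulF A X Y Z g f a b = (\<lambda>z. if z \<in> Z then
      mul A (fib X (map_comp g f) z) (fib Y g z) (restrict_map f (fib X (map_comp g f) z))
        (a z) (rfam b (fib Y g z))
    else undefined)"

text \<open>for c in A_{g o f}, b in A_f; result in A_g\<close>
definition conF :: "('a,'b) gring_scheme \<Rightarrow> nat set \<Rightarrow> nat set \<Rightarrow> nat set \<Rightarrow> (nat \<Rightarrow> nat option)
    \<Rightarrow> (nat \<Rightarrow> nat option) \<Rightarrow> (nat \<Rightarrow> 'a) \<Rightarrow> (nat \<Rightarrow> 'a) \<Rightarrow> nat \<Rightarrow> 'a" where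
  "conF A X Y Z g f c b = (\<lambda>z. if z \<in> Z then
      con A (fib X (map_comp g f) z) (fib Y g z) (restrict_map f (fib X (map_comp g f) z))
        (c z) (rfam b (fib Y g z))
    else undefined)"

definition pt :: "nat \<Rightarrow> nat \<Rightarrow> nat option" where
  "pt x = (\<lambda>i. if i = (1::nat) then Some x else None)"

definition one_at :: "('a,'b) gring_scheme \<Rightarrow> nat \<Rightarrow> 'a" where
  "one_at A x = trn A {1} {x} (pt x) (uni A)"

definition one_pb :: "('a,'b) gring_scheme \<Rightarrow> nat set \<Rightarrow> nat set \<Rightarrow> (nat \<Rightarrow> nat option) \<Rightarrow> nat \<Rightarrow> 'a" where
  "one_pb A X Y f = (\<lambda>y. if y \<in> Y then
      (if y \<in> ran f then one_at A (THE x. f x = Some y) else zer A {})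
    else undefined)"

text \<open>identification (A_[1])^X = A_{id_X} via the transports [1] -> {x}\<close>
definition scal_fam :: "('a,'b) gring_scheme \<Rightarrow> nat set \<Rightarrow> (nat \<Rightarrow> 'a) \<Rightarrow> nat \<Rightarrow> 'a" where
  "scal_fam A X c = (\<lambda>x. if x \<in> X then trn A {1} {x} (pt x) (c x) else undefined)"

text \<open>pullback P of Z -g-> Y <-f- X, encoded in nat via prod_encode;
  pbF : P -> Z is the pullback of f, pbG : P -> X the pullback of g\<close>
definition pbP :: "nat set \<Rightarrow> nat set \<Rightarrow> (nat \<Rightarrow> nat option) \<Rightarrow> (nat \<Rightarrow> nat option) \<Rightarrow> nat set" where
  "pbP X Z f g = {prod_encode (z, x) | z x. z \<in> Z \<and> x \<in> X \<and> g z \<noteq> None \<and> g z = f x}"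

definition pbF :: "nat set \<Rightarrow> nat \<Rightarrow> nat option" where
  "pbF P = (\<lambda>p. if p \<in> P then Some (fst (prod_decode p)) else None)"

definition pbG :: "nat set \<Rightarrow> nat \<Rightarrow> nat option" where
  "pbG P = (\<lambda>p. if p \<in> P then Some (snd (prod_decode p)) else None)"

text \<open>a~ with a~^(x) = a^(f(x)) (transported along the canonical bijection of fibres)\<close>
definition atil :: "('a,'b) gring_scheme \<Rightarrow> nat set \<Rightarrow> nat set \<Rightarrow> nat set \<Rightarrow> (nat \<Rightarrow> nat option)
    \<Rightarrow> (nat \<Rightarrow> nat option) \<Rightarrow> (nat \<Rightarrow> 'a) \<Rightarrow> nat \<Rightarrow> 'a" where
  "atil A X Z P f g a = (\<lambda>x. if x \<in> X then
      (case f x of None \<Rightarrow> zer A {}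
       | Some y \<Rightarrow> trn A (fib Z g y) (fib P (pbG P) x)
           (\<lambda>z. if z \<in> fib Z g y then Some (prod_encode (z, x)) else None) (a y))
    else undefined)"

text \<open>c~ with c~^(z) = c^(g(z))\<close>
definition ctil :: "('a,'b) gring_scheme \<Rightarrow> nat set \<Rightarrow> nat set \<Rightarrow> nat set \<Rightarrow> (nat \<Rightarrow> nat option)
    \<Rightarrow> (nat \<Rightarrow> nat option) \<Rightarrow> (nat \<Rightarrow> 'a) \<Rightarrow> nat \<Rightarrow> 'a" where
  "ctil A X Z P f g c = (\<lambda>z. if z \<in> Z then
      (case g z of None \<Rightarrow> zer A {}
       | Some y \<Rightarrow> trn A (fib X f y) (fib P (pbF P) z)
           (\<lambda>x. if x \<in> fib X f y then Some (prod_encode (z, x)) else None) (c y))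
    else undefined)"

definition mult1 :: "('a,'b) gring_scheme \<Rightarrow> 'a \<Rightarrow> 'a \<Rightarrow> 'a" where
  "mult1 A a b = mul A {1} {1} (idm {1}) a (wrap b)"

primrec pw :: "('a,'b) gring_scheme \<Rightarrow> 'a \<Rightarrow> nat \<Rightarrow> 'a" where
  "pw A a 0 = uni A"
| "pw A a (Suc n) = mult1 A a (pw A a n)"

definition gring :: "('a,'b) gring_scheme \<Rightarrow> bool" where
  "gring A \<longleftrightarrow>
    \<comment> \<open>functor to pointed sets, A_empty = {0}\<close>
    car A {} = {zer A {}} \<and>
    (\<forall>X. finite X \<longrightarrow> zer A X \<in> car A X) \<and>
    (\<forall>X Y f a. finite X \<and> finite Y \<and> pbij X Y f \<and> a \<in> car A X \<longrightarrow> trn A X Y f a \<in> car A Y) \<and>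
    (\<forall>X Y f. finite X \<and> finite Y \<and> pbij X Y f \<longrightarrow> trn A X Y f (zer A X) = zer A Y) \<and>
    (\<forall>X a. finite X \<and> a \<in> car A X \<longrightarrow> trn A X X (idm X) a = a) \<and>
    (\<forall>X Y Z f g a. finite X \<and> finite Y \<and> finite Z \<and> pbij X Y f \<and> pbij Y Z g \<and> a \<in> car A X \<longrightarrow>
        trn A X Z (map_comp g f) a = trn A Y Z g (trn A X Y f a)) \<and>
    \<comment> \<open>multiplication and contraction, zero if an argument is zero\<close>
    (\<forall>X Y f a b. finite X \<and> finite Y \<and> pmap X Y f \<and> a \<in> car A Y \<and> b \<in> fam A X Y f \<longrightarrow>
        mul A X Y f a b \<in> car A X) \<and>
    (\<forall>X Y f c b. finite X \<and> finite Y \<and> pmap X Y f \<and> c \<in> car A X \<and> b \<in> fam A X Y f \<longrightarrow>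
        con A X Y f c b \<in> car A Y) \<and>
    (\<forall>X Y f a b. finite X \<and> finite Y \<and> pmap X Y f \<and> a \<in> car A Y \<and> b \<in> fam A X Y f \<longrightarrow>
        mul A X Y f (zer A Y) b = zer A X \<and> mul A X Y f a (zfam A X Y f) = zer A X) \<and>
    (\<forall>X Y f c b. finite X \<and> finite Y \<and> pmap X Y f \<and> c \<in> car A X \<and> b \<in> fam A X Y f \<longrightarrow>
        con A X Y f (zer A X) b = zer A Y \<and> con A X Y f c (zfam A X Y f) = zer A Y) \<and>
    \<comment> \<open>unit\<close>
    uni A \<in> car A {1} \<and>
    \<comment> \<open>axioms for W <-h- Z <-g- Y <-f- X\<close>
    (\<forall>X Y Z W f g h.
       finite X \<and> finite Y \<and> finite Z \<and> finite W \<and> pmap X Y f \<and> pmap Y Z g \<and> pmap Z W h \<longrightarrow>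
       (\<forall>d c b. d \<in> fam A Z W h \<and> c \<in> fam A Y Z g \<and> b \<in> fam A X Y f \<longrightarrow>
          mulF A X Z W h (map_comp g f) d (mulF A X Y Z g f c b)
          = mulF A X Y W (map_comp h g) f (mulF A Y Z W h g d c) b) \<and>
       (\<forall>d a c. d \<in> fam A X W (map_comp h (map_comp g f)) \<and> a \<in> fam A Y Z g \<and> c \<in> fam A X Y f \<longrightarrow>
          conF A X Z W h (map_comp g f) d (mulF A X Y Z g f a c)
          = conF A Y Z W h g (conF A X Y W (map_comp h g) f d c) a) \<and>
       (\<forall>d a c. d \<in> fam A Y W (map_comp h g) \<and> a \<in> fam A X Z (map_comp g f) \<and> c \<in> fam A X Y f \<longrightarrow>
          conF A X Z W h (map_comp g f) (mulF A X Y W (map_comp h g) f d c) a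
          = conF A Y Z W h g d (conF A X Y Z g f a c)) \<and>
       (\<forall>d a c. d \<in> fam A Z W h \<and> a \<in> fam A X Z (map_comp g f) \<and> c \<in> fam A X Y f \<longrightarrow>
          conF A X Y W (map_comp h g) f (mulF A X Z W h (map_comp g f) d a) c
          = mulF A Y Z W h g d (conF A X Y Z g f a c))) \<and>
    \<comment> \<open>pullback axiom for Z -g-> Y <-f- X, h : Y -> W\<close>
    (\<forall>X Y Z W f g h d a c.
       finite X \<and> finite Y \<and> finite Z \<and> finite W \<and> pmap X Y f \<and> pmap Z Y g \<and> pmap Y W h \<and>
       d \<in> fam A X W (map_comp h f) \<and> a \<in> fam A Z Y g \<and> c \<in> fam A X Y f \<longrightarrow>
       (let P = pbP X Z f g in
         mulF A Z Y W h g (conF A X Y W h f d c) a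
         = conF A P Z W (map_comp h g) (pbF P)
             (mulF A P X W (map_comp h f) (pbG P) d (atil A X Z P f g a))
             (ctil A X Z P f g c))) \<and>
    \<comment> \<open>unit axioms\<close>
    (\<forall>X Y f a. finite X \<and> finite Y \<and> pmap X Y f \<and> a \<in> fam A X Y f \<longrightarrow>
       mulF A X X Y f (idm X) a (one_pb A X X (idm X)) = a \<and>
       mulF A X Y Y (idm Y) f (one_pb A Y Y (idm Y)) a = a \<and>
       conF A X X Y f (idm X) a (one_pb A X X (idm X)) = a) \<and>
    (\<forall>X Y f a. finite X \<and> finite Y \<and> pbij X Y f \<and> a \<in> car A X \<longrightarrow>
       mul A Y X (ptrans f) a (one_pb A Y X (ptrans f)) = trn A X Y f a \<and>
       con A X Y f a (one_pb A X Y f) = trn A X Y f a) \<and>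
    \<comment> \<open>A_[1] is a commutative monoid under multiplication\<close>
    (\<forall>a\<in>car A {1}. \<forall>b\<in>car A {1}. mult1 A a b = mult1 A b a) \<and>
    (\<forall>a\<in>car A {1}. \<forall>b\<in>car A {1}. \<forall>c\<in>car A {1}. mult1 A (mult1 A a b) c = mult1 A a (mult1 A b c)) \<and>
    (\<forall>a\<in>car A {1}. mult1 A (uni A) a = a)"

definition h_ideal :: "('a,'b) gring_scheme \<Rightarrow> 'a set \<Rightarrow> bool" where
  "h_ideal A I \<longleftrightarrow> I \<subseteq> car A {1} \<and>
    (\<forall>X b c d. finite X \<and> b \<in> car A X \<and> d \<in> car A X \<and> (\<forall>x\<in>X. c x \<in> I) \<longrightarrow>
       con A X {1} (cmap X) (mul A X X (idm X) b (scal_fam A X c)) (wrap d) \<in> I)"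

definition prime_h :: "('a,'b) gring_scheme \<Rightarrow> 'a set \<Rightarrow> bool" where
  "prime_h A p \<longleftrightarrow> h_ideal A p \<and> uni A \<notin> p \<and>
    (\<forall>a\<in>car A {1}. \<forall>b\<in>car A {1}. mult1 A a b \<in> p \<longrightarrow> a \<in> p \<or> b \<in> p)"

definition spec :: "('a,'b) gring_scheme \<Rightarrow> 'a set set" where
  "spec A = {p. prime_h A p}"

definition Vz :: "('a,'b) gring_scheme \<Rightarrow> 'a set \<Rightarrow> 'a set set" where
  "Vz A I = {p \<in> spec A. I \<subseteq> p}"

definition rad :: "('a,'b) gring_scheme \<Rightarrow> 'a set \<Rightarrow> 'a set" where
  "rad A I = {a \<in> car A {1}. \<exists>n>0. pw A a n \<in> I}"

definition zclosed :: "('a,'b) gring_scheme \<Rightarrow> 'a set set \<Rightarrow> bool" where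
  "zclosed A F \<longleftrightarrow> (\<exists>I. I \<subseteq> car A {1} \<and> F = Vz A I)"

definition zirreducible :: "('a,'b) gring_scheme \<Rightarrow> 'a set set \<Rightarrow> bool" where
  "zirreducible A S \<longleftrightarrow> S \<subseteq> spec A \<and> S \<noteq> {} \<and>
    (\<forall>F1 F2. zclosed A F1 \<and> zclosed A F2 \<and> S \<subseteq> F1 \<union> F2 \<longrightarrow> S \<subseteq> F1 \<or> S \<subseteq> F2)"

end

theory Submission
  imports Defs "HOL-Library.FuncSet"
begin

text \<open>If \<open>I\<close> is prime it is the generic point of \<open>V(I)\<close>, so \<open>V(I)\<close> is irreducible.
  Conversely, if \<open>a b \<in> I\<close> then \<open>V(I) \<subseteq> V(a) \<union> V(b)\<close>, so irreducibility gives, say,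
  \<open>V(I) \<subseteq> V(a)\<close>. If \<open>a\<close> were outside \<open>I = \<surd>I\<close>, Zorn's lemma would give an h-ideal containing
  \<open>I\<close> and maximal among those avoiding the powers of \<open>a\<close>; such an ideal is prime, contradicting
  \<open>V(I) \<subseteq> V(a)\<close>. Primality of the maximal ideal rests on colon ideals \<open>J : x\<close> being h-ideals,
  which follows from the pullback axiom: \<open>x \<cdot> (b \<circ> c, d)\<close> is again of the form
  \<open>(b' \<circ> c', d')\<close>, with coefficients \<open>c'\<close> the products \<open>c\<^sub>i x\<close>.\<close>

lemma gring_trn_closed:
  "gring A \<Longrightarrow> finite X \<Longrightarrow> finite Y \<Longrightarrow> pbij X Y f \<Longrightarrow> a \<in> car A X \<Longrightarrow> trn A X Y f a \<in> car A Y"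
  by (simp add: gring_def)

lemma gring_trn_idm: "gring A \<Longrightarrow> finite X \<Longrightarrow> a \<in> car A X \<Longrightarrow> trn A X X (idm X) a = a"
  by (simp add: gring_def)

lemma gring_mul_closed:
  "gring A \<Longrightarrow> finite X \<Longrightarrow> finite Y \<Longrightarrow> pmap X Y f \<Longrightarrow> a \<in> car A Y \<Longrightarrow> b \<in> fam A X Y f
   \<Longrightarrow> mul A X Y f a b \<in> car A X"
  by (simp add: gring_def)

lemma gring_con_closed:
  "gring A \<Longrightarrow> finite X \<Longrightarrow> finite Y \<Longrightarrow> pmap X Y f \<Longrightarrow> c \<in> car A X \<Longrightarrow> b \<in> fam A X Y f
   \<Longrightarrow> con A X Y f c b \<in> car A Y"
  by (simp add: gring_def)

lemma gring_uni_closed: "gring A \<Longrightarrow> uni A \<in> car A {1}"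
  by (simp add: gring_def)

lemma gring_mulF_assoc:
  assumes "gring A" "finite X" "finite Y" "finite Z" "finite W"
    and "pmap X Y f" "pmap Y Z g" "pmap Z W h"
    and "d \<in> fam A Z W h" "c \<in> fam A Y Z g" "b \<in> fam A X Y f"
  shows "mulF A X Z W h (map_comp g f) d (mulF A X Y Z g f c b)
       = mulF A X Y W (map_comp h g) f (mulF A Y Z W h g d c) b"
  using assms by (simp add: gring_def)

lemma gring_pullback:
  assumes "gring A" "finite X" "finite Y" "finite Z" "finite W"
    and "pmap X Y f" "pmap Z Y g" "pmap Y W h"
    and "d \<in> fam A X W (map_comp h f)" "a \<in> fam A Z Y g" "c \<in> fam A X Y f"
    and "P = pbP X Z f g"
  shows "mulF A Z Y W h g (conF A X Y W h f d c) a
       = conF A P Z W (map_comp h g) (pbF P)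
           (mulF A P X W (map_comp h f) (pbG P) d (atil A X Z P f g a)) (ctil A X Z P f g c)"
  using assms by (simp add: gring_def Let_def)

lemma gring_mulF_one_pb_left:
  "gring A \<Longrightarrow> finite X \<Longrightarrow> finite Y \<Longrightarrow> pmap X Y f \<Longrightarrow> a \<in> fam A X Y f
   \<Longrightarrow> mulF A X Y Y (idm Y) f (one_pb A Y Y (idm Y)) a = a"
  by (simp add: gring_def)

lemma gring_mul_one_pb:
  "gring A \<Longrightarrow> finite X \<Longrightarrow> finite Y \<Longrightarrow> pbij X Y f \<Longrightarrow> a \<in> car A X
   \<Longrightarrow> mul A Y X (ptrans f) a (one_pb A Y X (ptrans f)) = trn A X Y f a"
  by (simp add: gring_def)

lemma gring_con_one_pb:
  "gring A \<Longrightarrow> finite X \<Longrightarrow> finite Y \<Longrightarrow> pbij X Y f \<Longrightarrow> a \<in> car A X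
   \<Longrightarrow> con A X Y f a (one_pb A X Y f) = trn A X Y f a"
  by (simp add: gring_def)

lemma gring_mult1_commute:
  "gring A \<Longrightarrow> a \<in> car A {1} \<Longrightarrow> b \<in> car A {1} \<Longrightarrow> mult1 A a b = mult1 A b a"
  by (simp add: gring_def)

lemma gring_mult1_assoc:
  "gring A \<Longrightarrow> a \<in> car A {1} \<Longrightarrow> b \<in> car A {1} \<Longrightarrow> c \<in> car A {1}
   \<Longrightarrow> mult1 A (mult1 A a b) c = mult1 A a (mult1 A b c)"
  by (simp add: gring_def)

lemma gring_mult1_uni_left: "gring A \<Longrightarrow> a \<in> car A {1} \<Longrightarrow> mult1 A (uni A) a = a"
  unfolding gring_def by (elim conjE) (erule bspec)

section \<open>Partial maps and families\<close>

declare One_nat_def [simp del] \<comment> \<open>keeps the terminal set written as \<open>{1}\<close>\<close>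

lemma pt_1: "pt 1 = idm {1}"
  unfolding pt_def idm_def by (auto simp: fun_eq_iff)

lemma cmap_1: "cmap {1} = idm {1}"
  unfolding cmap_def idm_def by (auto simp: fun_eq_iff)

lemma pt_eq_map_upd: "pt i = [1 \<mapsto> i]"
  unfolding pt_def by (auto simp: fun_eq_iff)

lemma cmap_singleton: "cmap {p} = [p \<mapsto> 1]"
  unfolding cmap_def by (auto simp: fun_eq_iff)

lemma idm_singleton: "idm {p} = [p \<mapsto> p]"
  unfolding idm_def by (auto simp: fun_eq_iff)

lemma dom_idm [simp]: "dom (idm X) = X"
  unfolding idm_def dom_def by auto

lemma ran_idm [simp]: "ran (idm X) = X"
  unfolding idm_def ran_def by auto

lemma pmap_idm [simp]: "pmap X X (idm X)"
  unfolding pmap_def by simp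

lemma pbij_idm [simp]: "pbij X X (idm X)"
  unfolding pbij_def by (rule conjI[OF pmap_idm]) (auto simp: inj_on_def idm_def split: if_splits)

lemma the_idm [simp]: "y \<in> X \<Longrightarrow> (THE x. idm X x = Some y) = y"
  unfolding idm_def by (rule the_equality) (auto split: if_splits)

lemma fib_idm [simp]: "x \<in> X \<Longrightarrow> fib X (idm X) x = {x}"
  unfolding fib_def idm_def by auto

lemma pmap_cmap [simp]: "pmap X {1} (cmap X)"
  unfolding pmap_def cmap_def ran_def by (auto split: if_splits)

lemma fib_cmap [simp]: "fib X (cmap X) 1 = X"
  unfolding fib_def cmap_def by auto

lemma pbij_map_upd: "pbij {p} {i} [p \<mapsto> i]"
  unfolding pbij_def pmap_def by simp

lemma ptrans_map_upd: "ptrans [p \<mapsto> i] = [i \<mapsto> p]"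
  unfolding ptrans_def by (auto simp: fun_eq_iff)

definition total_map :: "nat set \<Rightarrow> nat set \<Rightarrow> (nat \<Rightarrow> nat option) \<Rightarrow> bool" where
  "total_map X Y f \<longleftrightarrow> dom f = X \<and> ran f \<subseteq> Y"

lemma total_map_pmap: "total_map X Y f \<Longrightarrow> pmap X Y f"
  unfolding total_map_def pmap_def by auto

lemma total_map_cmap: "total_map X {1} (cmap X)"
  unfolding total_map_def cmap_def dom_def ran_def by (auto split: if_splits)

lemma total_map_idm: "total_map X X (idm X)"
  unfolding total_map_def by simp

lemma total_map_map_upd: "total_map {p} {i} [p \<mapsto> i]"
  unfolding total_map_def by simp

lemma cmap_comp: "total_map X Y f \<Longrightarrow> map_comp (cmap Y) f = cmap X"
  unfolding total_map_def cmap_def map_comp_def fun_eq_iff ran_def dom_def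
  by (auto split: option.splits)

lemma idm_comp: "ran f \<subseteq> Y \<Longrightarrow> map_comp (idm Y) f = f"
  unfolding idm_def map_comp_def fun_eq_iff ran_def
  by (auto split: option.splits)

lemma comp_idm: "dom f \<subseteq> X \<Longrightarrow> map_comp f (idm X) = f"
  unfolding idm_def map_comp_def fun_eq_iff
  by (auto split: option.splits) (metis domIff subsetD)

lemma restrict_map_dom_subset: "dom f \<subseteq> X \<Longrightarrow> restrict_map f X = f"
  unfolding restrict_map_def fun_eq_iff by auto (metis domIff subsetD)

lemma fam_extensional: "b \<in> fam A X Y f \<Longrightarrow> b \<in> extensional Y"
  unfolding fam_def extensional_def by auto

lemma wrap_extensional [simp]: "wrap b \<in> extensional {1}"
  unfolding extensional_def wrap_def by auto

lemma rfam_extensional: "b \<in> extensional Y \<Longrightarrow> rfam b Y = b"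
  unfolding rfam_def extensional_def fun_eq_iff by auto

lemma mulF_extensional: "mulF A X Y Z g f a b \<in> extensional Z"
  unfolding extensional_def mulF_def by auto

lemma wrap_1 [simp]: "wrap b 1 = b"
  unfolding wrap_def by simp

lemma wrap_eq_iff [simp]: "wrap a = wrap b \<longleftrightarrow> a = b"
  by (metis wrap_1)

lemma wrap_fam: "b \<in> car A X \<Longrightarrow> wrap b \<in> fam A X {1} (cmap X)"
  unfolding fam_def wrap_def by auto

lemma wrap_fam_idm: "b \<in> car A {1} \<Longrightarrow> wrap b \<in> fam A {1} {1} (idm {1})"
  unfolding fam_def wrap_def by auto

lemma mulF_cmap: "total_map X Y f \<Longrightarrow> b \<in> extensional Y \<Longrightarrow>
    mulF A X Y {1} (cmap Y) f a b = wrap (mul A X Y f (a 1) b)"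
  unfolding mulF_def wrap_def
  by (auto simp: fun_eq_iff cmap_comp restrict_map_dom_subset rfam_extensional total_map_def)

lemma conF_cmap: "total_map X Y f \<Longrightarrow> b \<in> extensional Y \<Longrightarrow>
    conF A X Y {1} (cmap Y) f a b = wrap (con A X Y f (a 1) b)"
  unfolding conF_def wrap_def
  by (auto simp: fun_eq_iff cmap_comp restrict_map_dom_subset rfam_extensional total_map_def)

lemma mult1_def_cmap: "mult1 A a b = mul A {1} {1} (cmap {1}) a (wrap b)"
  unfolding mult1_def cmap_1 ..

lemma mult1_closed: "gring A \<Longrightarrow> a \<in> car A {1} \<Longrightarrow> b \<in> car A {1} \<Longrightarrow> mult1 A a b \<in> car A {1}"
  unfolding mult1_def by (rule gring_mul_closed) (auto intro: wrap_fam_idm)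

lemma pw_closed: "gring A \<Longrightarrow> a \<in> car A {1} \<Longrightarrow> pw A a n \<in> car A {1}"
  by (induction n) (auto simp: gring_uni_closed mult1_closed)

lemma pw_1: "gring A \<Longrightarrow> a \<in> car A {1} \<Longrightarrow> pw A a 1 = a"
  using gring_mult1_commute gring_mult1_uni_left gring_uni_closed by (fastforce simp: One_nat_def)

lemma pw_add: "gring A \<Longrightarrow> a \<in> car A {1} \<Longrightarrow> pw A a (m + n) = mult1 A (pw A a m) (pw A a n)"
  by (induction m) (auto simp: gring_mult1_uni_left pw_closed gring_mult1_assoc)

section \<open>Units and transports of scalars\<close>

lemma one_pb_idm_1: "gring A \<Longrightarrow> one_pb A {1} {1} (idm {1}) = wrap (uni A)"
  unfolding one_pb_def wrap_def one_at_def
  by (auto simp: fun_eq_iff pt_1 gring_trn_idm gring_uni_closed)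

lemma scal_fam_1: "gring A \<Longrightarrow> z \<in> car A {1} \<Longrightarrow> scal_fam A {1} (\<lambda>_. z) = wrap z"
  unfolding scal_fam_def wrap_def by (auto simp: fun_eq_iff pt_1 gring_trn_idm)

lemma trn_pt_closed: "gring A \<Longrightarrow> v \<in> car A {1} \<Longrightarrow> trn A {1} {p} (pt p) v \<in> car A {p}"
  unfolding pt_eq_map_upd by (rule gring_trn_closed) (auto simp: pbij_map_upd)

lemma scal_fam_fam:
  "gring A \<Longrightarrow> (\<And>i. i \<in> X \<Longrightarrow> c i \<in> car A {1}) \<Longrightarrow> scal_fam A X c \<in> fam A X X (idm X)"
  unfolding fam_def scal_fam_def by (auto simp: trn_pt_closed)

lemma one_at_closed: "gring A \<Longrightarrow> one_at A p \<in> car A {p}"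
  unfolding one_at_def by (intro trn_pt_closed gring_uni_closed)

lemma one_pb_map_upd: "one_pb A {p} {i} [p \<mapsto> i] = (\<lambda>y. if y = i then one_at A p else undefined)"
  unfolding one_pb_def by (auto simp: fun_eq_iff)

definition wrap_at :: "nat \<Rightarrow> 'a \<Rightarrow> nat \<Rightarrow> 'a" where
  "wrap_at i w = (\<lambda>y. if y = i then w else undefined)"

lemma wrap_at_1: "wrap_at 1 = wrap"
  unfolding wrap_def wrap_at_def by (auto simp: fun_eq_iff)

lemma wrap_at_extensional [simp]: "wrap_at i w \<in> extensional {i}"
  unfolding extensional_def wrap_at_def by auto

lemma wrap_at_same [simp]: "wrap_at i w i = w"
  unfolding wrap_at_def by simp

lemma wrap_at_fam: "w \<in> car A {p} \<Longrightarrow> wrap_at i w \<in> fam A {p} {i} [p \<mapsto> i]"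
  unfolding fam_def wrap_at_def fib_def by auto

lemma mulF_map_upd_self: "mulF A X {i} {i} [i \<mapsto> i] f a b
    = wrap_at i (mul A (fib X (map_comp [i \<mapsto> i] f) i) {i}
        (restrict_map f (fib X (map_comp [i \<mapsto> i] f) i)) (a i) (rfam b {i}))"
  unfolding mulF_def wrap_at_def fib_def by (auto simp: fun_eq_iff)

lemma mul_one_at_left:
  assumes g: "gring A" and w: "w \<in> car A {p}"
  shows "mul A {p} {i} [p \<mapsto> i] (one_at A i) (wrap_at i w) = w"
proof -
  have unit: "mulF A {p} {i} {i} (idm {i}) [p \<mapsto> i] (one_pb A {i} {i} (idm {i})) (wrap_at i w)
      = wrap_at i w"
    by (rule gring_mulF_one_pb_left[OF g])
      (auto simp: total_map_pmap[OF total_map_map_upd] wrap_at_fam[OF w])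
  have "map_comp [i \<mapsto> i] [p \<mapsto> i] = [p \<mapsto> i]"
    by (auto simp: fun_eq_iff map_comp_def)
  moreover have "fib {p} [p \<mapsto> i] i = {p}"
    unfolding fib_def by auto
  ultimately show ?thesis
    using fun_cong[OF unit, of i] unfolding idm_singleton mulF_map_upd_self
    by (simp add: restrict_map_dom_subset rfam_extensional one_pb_map_upd)
qed

lemma trn_pt_eq_mul_one_at:
  assumes g: "gring A" and v: "v \<in> car A {1}"
  shows "trn A {1} {p} (pt p) v = mul A {p} {1} (cmap {p}) v (wrap (one_at A p))"
proof -
  have "mul A {p} {1} (ptrans [1 \<mapsto> p]) v (one_pb A {p} {1} (ptrans [1 \<mapsto> p])) = trn A {1} {p} [1 \<mapsto> p] v"
    by (rule gring_mul_one_pb[OF g]) (auto simp: pbij_map_upd v)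
  then show ?thesis
    by (simp add: ptrans_map_upd pt_eq_map_upd cmap_singleton one_pb_map_upd wrap_def)
qed

text \<open>Each transport is a product with a unit, by the lemma above; reassociate.\<close>

lemma mul_trn_pt:
  assumes g: "gring A" and u: "u \<in> car A {1}" and v: "v \<in> car A {1}"
  shows "mul A {p} {i} [p \<mapsto> i] (trn A {1} {i} (pt i) u) (wrap_at i (trn A {1} {p} (pt p) v))
     = trn A {1} {p} (pt p) (mult1 A u v)"
proof -
  define vp where "vp = trn A {1} {p} (pt p) v"
  have vp: "vp \<in> car A {p}" unfolding vp_def by (rule trn_pt_closed[OF g v])
  have "mulF A {p} {1} {1} (cmap {1}) (map_comp (cmap {i}) [p \<mapsto> i]) (wrap u)
      (mulF A {p} {i} {1} (cmap {i}) [p \<mapsto> i] (wrap (one_at A i)) (wrap_at i vp))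
    = mulF A {p} {i} {1} (map_comp (cmap {1}) (cmap {i})) [p \<mapsto> i]
      (mulF A {i} {1} {1} (cmap {1}) (cmap {i}) (wrap u) (wrap (one_at A i))) (wrap_at i vp)"
    by (rule gring_mulF_assoc[OF g])
      (auto simp: u vp wrap_fam wrap_at_fam one_at_closed[OF g] total_map_pmap[OF total_map_map_upd]
        total_map_pmap[OF total_map_cmap])
  then have u_vp: "mul A {p} {1} (cmap {p}) u (wrap vp)
      = mul A {p} {i} [p \<mapsto> i] (mul A {i} {1} (cmap {i}) u (wrap (one_at A i))) (wrap_at i vp)"
    unfolding cmap_comp[OF total_map_map_upd] cmap_comp[OF total_map_cmap]
    by (simp add: mulF_cmap[OF total_map_cmap] mulF_cmap[OF total_map_map_upd] mul_one_at_left[OF g vp]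
        wrap_at_1)
  have "mulF A {p} {1} {1} (cmap {1}) (map_comp (cmap {1}) (cmap {p})) (wrap u)
      (mulF A {p} {1} {1} (cmap {1}) (cmap {p}) (wrap v) (wrap (one_at A p)))
    = mulF A {p} {1} {1} (map_comp (cmap {1}) (cmap {1})) (cmap {p})
      (mulF A {1} {1} {1} (cmap {1}) (cmap {1}) (wrap u) (wrap v)) (wrap (one_at A p))"
    by (rule gring_mulF_assoc[OF g])
      (auto simp: u v wrap_fam one_at_closed[OF g] total_map_pmap[OF total_map_cmap])
  then have "mul A {p} {1} (cmap {p}) u (wrap (mul A {p} {1} (cmap {p}) v (wrap (one_at A p))))
      = mul A {p} {1} (cmap {p}) (mult1 A u v) (wrap (one_at A p))"
    unfolding cmap_comp[OF total_map_cmap]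
    by (simp add: mulF_cmap[OF total_map_cmap] mult1_def cmap_1[symmetric])
  then show ?thesis
    using u_vp trn_pt_eq_mul_one_at[OF g u, of i] trn_pt_eq_mul_one_at[OF g v, of p]
      trn_pt_eq_mul_one_at[OF g mult1_closed[OF g u v], of p]
    unfolding vp_def by simp
qed

section \<open>h-combinations\<close>

definition hcomb :: "('a, 'b) gring_scheme \<Rightarrow> nat set \<Rightarrow> 'a \<Rightarrow> (nat \<Rightarrow> 'a) \<Rightarrow> 'a \<Rightarrow> 'a" where
  "hcomb A X b c d = con A X {1} (cmap X) (mul A X X (idm X) b (scal_fam A X c)) (wrap d)"

lemma hcomb_closed:
  assumes g: "gring A" and X: "finite X" and b: "b \<in> car A X" and d: "d \<in> car A X"
    and c: "\<And>i. i \<in> X \<Longrightarrow> c i \<in> car A {1}"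
  shows "hcomb A X b c d \<in> car A {1}"
  unfolding hcomb_def
  by (intro gring_con_closed[OF g X] gring_mul_closed[OF g X X] scal_fam_fam[OF g] wrap_fam)
    (auto simp: b d c)

lemma h_ideal_subset: "h_ideal A J \<Longrightarrow> J \<subseteq> car A {1}"
  unfolding h_ideal_def by blast

lemma h_ideal_hcomb:
  "h_ideal A J \<Longrightarrow> finite X \<Longrightarrow> b \<in> car A X \<Longrightarrow> d \<in> car A X \<Longrightarrow> (\<And>x. x \<in> X \<Longrightarrow> c x \<in> J)
   \<Longrightarrow> hcomb A X b c d \<in> J"
  unfolding h_ideal_def hcomb_def by blast

lemma h_idealI:
  assumes "J \<subseteq> car A {1}"
    and "\<And>X b c d. finite X \<Longrightarrow> b \<in> car A X \<Longrightarrow> d \<in> car A X \<Longrightarrow> (\<And>x. x \<in> X \<Longrightarrow> c x \<in> J)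
           \<Longrightarrow> hcomb A X b c d \<in> J"
  shows "h_ideal A J"
  using assms unfolding h_ideal_def hcomb_def by blast

lemma hcomb_singleton:
  assumes g: "gring A" and w: "w \<in> car A {1}" and z: "z \<in> car A {1}"
  shows "hcomb A {1} w (\<lambda>_. z) (uni A) = mult1 A w z"
  using gring_con_one_pb[OF g, of "{1}" "{1}" "idm {1}" "mult1 A w z"]
  unfolding hcomb_def
  by (simp add: scal_fam_1[OF g z] cmap_1 one_pb_idm_1[OF g] mult1_def[symmetric] mult1_closed[OF g w z]
      gring_trn_idm[OF g])

lemma h_ideal_mult1_closed:
  assumes g: "gring A" and J: "h_ideal A J" and z: "z \<in> J" and w: "w \<in> car A {1}"
  shows "mult1 A w z \<in> J"
proof -
  have "hcomb A {1} w (\<lambda>_. z) (uni A) \<in> J"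
    by (rule h_ideal_hcomb[OF J]) (auto simp: w z gring_uni_closed[OF g])
  then show ?thesis
    using hcomb_singleton[OF g w] z h_ideal_subset[OF J] by auto
qed
section \<open>Scalar multiples of h-combinations\<close>

text \<open>The pullback of \<open>cmap X\<close> and \<open>cmap {1}\<close> is \<open>{1} \<times> X\<close>, encoded by \<open>pair1\<close>.\<close>

definition pair1 :: "nat \<Rightarrow> nat" where
  "pair1 i = prod_encode (1, i)"

definition pair1_map :: "nat set \<Rightarrow> nat \<Rightarrow> nat option" where
  "pair1_map X = (\<lambda>i. if i \<in> X then Some (pair1 i) else None)"

lemma pair1_eq_iff [simp]: "pair1 i = pair1 j \<longleftrightarrow> i = j"
  unfolding pair1_def by simp

lemma snd_prod_decode_pair1 [simp]: "snd (prod_decode (pair1 i)) = i"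
  unfolding pair1_def by simp

lemma pbP_cmap: "pbP X {1} (cmap X) (cmap {1}) = pair1 ` X"
  unfolding pbP_def pair1_def cmap_def by auto

lemma pbF_pair1: "pbF (pair1 ` X) = cmap (pair1 ` X)"
  unfolding pbF_def cmap_def pair1_def by (auto simp: fun_eq_iff)

lemma pbG_pair1: "pbG (pair1 ` X) = ptrans (pair1_map X)"
  unfolding pbG_def ptrans_def pair1_map_def pair1_def
  by (auto simp: fun_eq_iff split: if_splits intro!: the_equality[symmetric])

lemma pbG_pair1_apply: "i \<in> X \<Longrightarrow> pbG (pair1 ` X) (pair1 i) = Some i"
  unfolding pbG_def pair1_def by auto

lemma dom_pbG [simp]: "dom (pbG P) = P"
  unfolding pbG_def dom_def by auto

lemma ran_pbG_pair1: "ran (pbG (pair1 ` X)) = X"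
  unfolding pbG_def ran_def pair1_def
  by (auto simp: image_iff) (metis prod_encode_inverse snd_conv)

lemma total_map_pbG_pair1: "total_map (pair1 ` X) X (pbG (pair1 ` X))"
  unfolding total_map_def by (simp add: ran_pbG_pair1)

lemma pbij_pair1_map: "pbij X (pair1 ` X) (pair1_map X)"
  unfolding pbij_def pmap_def pair1_map_def dom_def ran_def inj_on_def
  by (auto split: if_splits)

lemma fib_pbG_pair1: "i \<in> X \<Longrightarrow> fib (pair1 ` X) (pbG (pair1 ` X)) i = {pair1 i}"
  unfolding fib_def pbG_def pair1_def by auto

lemma restrict_map_pbG_pair1:
  "i \<in> X \<Longrightarrow> restrict_map (pbG (pair1 ` X)) {pair1 i} = [pair1 i \<mapsto> i]"
  unfolding restrict_map_def using pbG_pair1_apply[of i X] by (auto simp: fun_eq_iff)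

lemma the_pbG_pair1: "i \<in> X \<Longrightarrow> (THE p. pbG (pair1 ` X) p = Some i) = pair1 i"
  by (rule the_equality) (auto simp: pbG_pair1_apply pbG_def pair1_def split: if_splits)

lemma one_pb_pbG_pair1:
  "i \<in> X \<Longrightarrow> one_pb A (pair1 ` X) X (pbG (pair1 ` X)) i = one_at A (pair1 i)"
  unfolding one_pb_def using ran_pbG_pair1[of X] by (simp add: the_pbG_pair1)

lemma one_pb_pbG_pair1_fam:
  "gring A \<Longrightarrow> one_pb A (pair1 ` X) X (pbG (pair1 ` X)) \<in> fam A (pair1 ` X) X (pbG (pair1 ` X))"
  unfolding fam_def by (auto simp: one_pb_pbG_pair1 fib_pbG_pair1 one_at_closed) (auto simp: one_pb_def)

definition pb_const :: "('a, 'b) gring_scheme \<Rightarrow> nat set \<Rightarrow> 'a \<Rightarrow> nat \<Rightarrow> 'a" where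
  "pb_const A X x = (\<lambda>i. if i \<in> X then trn A {1} {pair1 i} (pt (pair1 i)) x else undefined)"

lemma pb_const_fam:
  "gring A \<Longrightarrow> x \<in> car A {1} \<Longrightarrow> pb_const A X x \<in> fam A (pair1 ` X) X (pbG (pair1 ` X))"
  unfolding fam_def pb_const_def by (auto simp: fib_pbG_pair1 trn_pt_closed)

lemma pb_const_extensional: "pb_const A X x \<in> extensional X"
  unfolding extensional_def pb_const_def by auto

lemma atil_cmap: "atil A X {1} (pair1 ` X) (cmap X) (cmap {1}) (wrap x) = pb_const A X x"
proof -
  have "(\<lambda>z. if z \<in> fib {1} (cmap {1}) 1 then Some (prod_encode (z, i)) else None) = pt (pair1 i)" for i
    unfolding pt_def pair1_def fib_def cmap_def by (auto simp: fun_eq_iff)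
  moreover have "fib {1} (cmap {1}) 1 = {1}"
    by simp
  ultimately show ?thesis
    unfolding atil_def pb_const_def by (auto simp: fun_eq_iff fib_pbG_pair1 cmap_def)
qed

lemma ctil_cmap:
  "ctil A X {1} (pair1 ` X) (cmap X) (cmap {1}) (wrap d) = wrap (trn A X (pair1 ` X) (pair1_map X) d)"
proof -
  have "(\<lambda>x. if x \<in> fib X (cmap X) 1 then Some (prod_encode (1, x)) else None) = pair1_map X"
    unfolding pair1_map_def pair1_def by (auto simp: fun_eq_iff)
  moreover have "fib (pair1 ` X) (pbF (pair1 ` X)) 1 = pair1 ` X"
    by (simp add: pbF_pair1)
  ultimately show ?thesis
    unfolding ctil_def wrap_def by (auto simp: fun_eq_iff cmap_def[of "{1}"])
qed

lemma mult1_con_cmap: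
  assumes g: "gring A" and X: "finite X" and e: "e \<in> car A X" and d: "d \<in> car A X"
    and x: "x \<in> car A {1}"
  shows "mult1 A (con A X {1} (cmap X) e (wrap d)) x
    = con A (pair1 ` X) {1} (cmap (pair1 ` X)) (mul A (pair1 ` X) X (pbG (pair1 ` X)) e (pb_const A X x))
        (wrap (trn A X (pair1 ` X) (pair1_map X) d))"
proof -
  let ?P = "pbP X {1} (cmap X) (cmap {1})"
  have "mulF A {1} {1} {1} (cmap {1}) (cmap {1}) (conF A X {1} {1} (cmap {1}) (cmap X) (wrap e) (wrap d))
      (wrap x)
    = conF A ?P {1} {1} (map_comp (cmap {1}) (cmap {1})) (pbF ?P)
        (mulF A ?P X {1} (map_comp (cmap {1}) (cmap X)) (pbG ?P) (wrap e)
          (atil A X {1} ?P (cmap X) (cmap {1}) (wrap x)))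
        (ctil A X {1} ?P (cmap X) (cmap {1}) (wrap d))"
    by (rule gring_pullback[OF g X])
      (auto simp: cmap_comp[OF total_map_cmap] wrap_fam e d x)
  then show ?thesis
    unfolding cmap_comp[OF total_map_cmap] pbP_cmap pbF_pair1 atil_cmap ctil_cmap
    by (simp add: conF_cmap[OF total_map_cmap] mulF_cmap[OF total_map_cmap]
        mulF_cmap[OF total_map_pbG_pair1 pb_const_extensional] mult1_def_cmap)
qed

lemma mulF_scal_fam_pb_const:
  assumes g: "gring A" and x: "x \<in> car A {1}" and c: "\<And>i. i \<in> X \<Longrightarrow> c i \<in> car A {1}"
  defines "P \<equiv> pair1 ` X" and "\<psi> \<equiv> pbG (pair1 ` X)"
  shows "mulF A P X X (idm X) \<psi> (scal_fam A X c) (pb_const A X x)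
    = mulF A P P X \<psi> (idm P) (one_pb A P X \<psi>) (scal_fam A P (\<lambda>p. mult1 A (c (snd (prod_decode p))) x))"
    (is "?lhs = ?rhs")
proof
  fix i
  have \<psi>_comp_idm: "map_comp \<psi> (idm P) = \<psi>" and idm_comp_\<psi>: "map_comp (idm X) \<psi> = \<psi>"
    using total_map_pbG_pair1[of X] unfolding total_map_def \<psi>_def P_def by (auto simp: comp_idm idm_comp)
  show "?lhs i = ?rhs i"
  proof (cases "i \<in> X")
    case False
    then show ?thesis unfolding mulF_def by simp
  next
    case True
    have fib: "fib P \<psi> i = {pair1 i}"
      unfolding P_def \<psi>_def using fib_pbG_pair1[OF True] .
    have restr_\<psi>: "restrict_map \<psi> {pair1 i} = [pair1 i \<mapsto> i]"
      unfolding P_def \<psi>_def using restrict_map_pbG_pair1[OF True] .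
    have restr_idm: "restrict_map (idm P) {pair1 i} = [pair1 i \<mapsto> pair1 i]"
      unfolding restrict_map_def idm_def P_def using True by (auto simp: fun_eq_iff)
    have "?lhs i = trn A {1} {pair1 i} (pt (pair1 i)) (mult1 A (c i) x)"
      using True idm_comp_\<psi> fib restr_\<psi> mul_trn_pt[OF g c[OF True] x, of "pair1 i" i]
      unfolding mulF_def scal_fam_def rfam_def pb_const_def wrap_at_def
      by (simp cong: if_cong)
    also have "\<dots> = ?rhs i"
      using True \<psi>_comp_idm fib restr_idm one_pb_pbG_pair1[OF True, of A]
        mul_one_at_left[OF g trn_pt_closed[OF g mult1_closed[OF g c[OF True] x]], of "pair1 i" "pair1 i"]
      unfolding mulF_def scal_fam_def rfam_def P_def \<psi>_def wrap_at_def
      by (simp cong: if_cong)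
    finally show ?thesis .
  qed
qed

lemma mul_scal_fam_pb_const:
  assumes g: "gring A" and X: "finite X" and b: "b \<in> car A X" and x: "x \<in> car A {1}"
    and c: "\<And>i. i \<in> X \<Longrightarrow> c i \<in> car A {1}"
  defines "P \<equiv> pair1 ` X" and "\<psi> \<equiv> pbG (pair1 ` X)"
  shows "mul A P X \<psi> (mul A X X (idm X) b (scal_fam A X c)) (pb_const A X x)
    = mul A P P (idm P) (trn A X P (pair1_map X) b) (scal_fam A P (\<lambda>p. mult1 A (c (snd (prod_decode p))) x))"
proof -
  define s where "s = scal_fam A X c"
  define s' where "s' = scal_fam A P (\<lambda>p. mult1 A (c (snd (prod_decode p))) x)"
  have P: "finite P" unfolding P_def using X by simp
  have \<psi>: "total_map P X \<psi>" unfolding \<psi>_def P_def by (rule total_map_pbG_pair1)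
  have s: "s \<in> fam A X X (idm X)" unfolding s_def by (rule scal_fam_fam[OF g c])
  have s': "s' \<in> fam A P P (idm P)" unfolding s'_def
    by (rule scal_fam_fam[OF g]) (auto simp: P_def c x mult1_closed[OF g])
  have const: "pb_const A X x \<in> fam A P X \<psi>" unfolding \<psi>_def P_def by (rule pb_const_fam[OF g x])
  have one: "one_pb A P X \<psi> \<in> fam A P X \<psi>" unfolding P_def \<psi>_def by (rule one_pb_pbG_pair1_fam[OF g])
  have idm_comp_\<psi>: "map_comp (idm X) \<psi> = \<psi>" and \<psi>_comp_idm: "map_comp \<psi> (idm P) = \<psi>"
    using \<psi> unfolding total_map_def by (auto simp: idm_comp comp_idm)
  have "mulF A P X {1} (cmap X) (map_comp (idm X) \<psi>) (wrap b) (mulF A P X X (idm X) \<psi> s (pb_const A X x))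
     = mulF A P X {1} (map_comp (cmap X) (idm X)) \<psi> (mulF A X X {1} (cmap X) (idm X) (wrap b) s)
        (pb_const A X x)"
    by (rule gring_mulF_assoc[OF g P X X]) (auto simp: total_map_pmap[OF \<psi>] wrap_fam b s const)
  then have "mul A P X \<psi> (mul A X X (idm X) b s) (pb_const A X x)
      = mul A P X \<psi> b (mulF A P X X (idm X) \<psi> s (pb_const A X x))"
    unfolding idm_comp_\<psi> cmap_comp[OF total_map_idm]
    by (simp add: mulF_cmap[OF \<psi>] mulF_cmap[OF total_map_idm] mulF_extensional fam_extensional[OF s]
        fam_extensional[OF const])
  also have "\<dots> = mul A P X \<psi> b (mulF A P P X \<psi> (idm P) (one_pb A P X \<psi>) s')"
    unfolding s_def s'_def P_def \<psi>_def by (simp add: mulF_scal_fam_pb_const[OF g x c])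
  also have "\<dots> = mul A P P (idm P) (mul A P X \<psi> b (one_pb A P X \<psi>)) s'"
  proof -
    have "mulF A P X {1} (cmap X) (map_comp \<psi> (idm P)) (wrap b) (mulF A P P X \<psi> (idm P) (one_pb A P X \<psi>) s')
       = mulF A P P {1} (map_comp (cmap X) \<psi>) (idm P) (mulF A P X {1} (cmap X) \<psi> (wrap b) (one_pb A P X \<psi>)) s'"
      by (rule gring_mulF_assoc[OF g P P X]) (auto simp: total_map_pmap[OF \<psi>] wrap_fam b s' one)
    then show ?thesis
      unfolding \<psi>_comp_idm cmap_comp[OF \<psi>]
      by (simp add: mulF_cmap[OF \<psi>] mulF_cmap[OF total_map_idm] mulF_extensional fam_extensional[OF s']
          fam_extensional[OF one])
  qed
  also have "mul A P X \<psi> b (one_pb A P X \<psi>) = trn A X P (pair1_map X) b"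
    using gring_mul_one_pb[OF g X P pbij_pair1_map[of X, folded P_def] b]
    unfolding \<psi>_def P_def pbG_pair1 .
  finally show ?thesis unfolding s'_def s_def .
qed

lemma mult1_hcomb:
  assumes g: "gring A" and X: "finite X" and b: "b \<in> car A X" and d: "d \<in> car A X"
    and x: "x \<in> car A {1}" and c: "\<And>i. i \<in> X \<Longrightarrow> c i \<in> car A {1}"
  shows "mult1 A (hcomb A X b c d) x
    = hcomb A (pair1 ` X) (trn A X (pair1 ` X) (pair1_map X) b)
        (\<lambda>p. mult1 A (c (snd (prod_decode p))) x) (trn A X (pair1 ` X) (pair1_map X) d)"
proof -
  have "mul A X X (idm X) b (scal_fam A X c) \<in> car A X"
    by (rule gring_mul_closed[OF g X X pmap_idm b scal_fam_fam[OF g c]])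
  then show ?thesis
    unfolding hcomb_def
    by (simp add: mult1_con_cmap[OF g X _ d x] mul_scal_fam_pb_const[OF g X b x c])
qed
section \<open>Colon ideals and primes avoiding powers\<close>

definition colon :: "('a, 'b) gring_scheme \<Rightarrow> 'a set \<Rightarrow> 'a \<Rightarrow> 'a set" where
  "colon A J x = {y \<in> car A {1}. mult1 A x y \<in> J}"

lemma subset_colon: "gring A \<Longrightarrow> h_ideal A J \<Longrightarrow> x \<in> car A {1} \<Longrightarrow> J \<subseteq> colon A J x"
  unfolding colon_def using h_ideal_subset[of A J] h_ideal_mult1_closed[of A J _ x] by auto

lemma h_ideal_colon:
  assumes g: "gring A" and J: "h_ideal A J" and x: "x \<in> car A {1}"
  shows "h_ideal A (colon A J x)"
proof (rule h_idealI)
  show "colon A J x \<subseteq> car A {1}" unfolding colon_def by auto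
next
  fix X b c d
  assume X: "finite X" and b: "b \<in> car A X" and d: "d \<in> car A X" and cJ: "\<And>i. i \<in> X \<Longrightarrow> c i \<in> colon A J x"
  have c: "c i \<in> car A {1}" and xc: "mult1 A x (c i) \<in> J" if "i \<in> X" for i
    using cJ[OF that] unfolding colon_def by auto
  have comb: "hcomb A X b c d \<in> car A {1}" by (rule hcomb_closed[OF g X b d c])
  have "hcomb A (pair1 ` X) (trn A X (pair1 ` X) (pair1_map X) b)
      (\<lambda>p. mult1 A (c (snd (prod_decode p))) x) (trn A X (pair1 ` X) (pair1_map X) d) \<in> J"
  proof (rule h_ideal_hcomb[OF J])
    show "trn A X (pair1 ` X) (pair1_map X) b \<in> car A (pair1 ` X)"
      by (rule gring_trn_closed[OF g X _ pbij_pair1_map b]) (simp add: X)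
    show "trn A X (pair1 ` X) (pair1_map X) d \<in> car A (pair1 ` X)"
      by (rule gring_trn_closed[OF g X _ pbij_pair1_map d]) (simp add: X)
  qed (auto simp: X xc c x gring_mult1_commute[OF g])
  then have "mult1 A (hcomb A X b c d) x \<in> J"
    by (simp add: mult1_hcomb[OF g X b d x c])
  then show "hcomb A X b c d \<in> colon A J x"
    unfolding colon_def using comb gring_mult1_commute[OF g x comb] by simp
qed

lemma chain_finite_bound:
  assumes "finite X" and "chain\<^sub>\<subseteq> C" and "C \<noteq> {}" and "\<forall>x\<in>X. c x \<in> \<Union>C"
  shows "\<exists>K\<in>C. \<forall>x\<in>X. c x \<in> K"
  using assms(1,4)
proof (induction X rule: finite_induct)
  case empty
  then show ?case using \<open>C \<noteq> {}\<close> by auto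
next
  case (insert y F)
  then obtain K K' where K: "K \<in> C" "\<forall>x\<in>F. c x \<in> K" and K': "K' \<in> C" "c y \<in> K'" by auto
  from \<open>chain\<^sub>\<subseteq> C\<close> K(1) K'(1) have "K \<subseteq> K' \<or> K' \<subseteq> K" unfolding chain_subset_def by blast
  then show ?case using K K' by blast
qed

lemma h_ideal_Union_chain:
  assumes "chain\<^sub>\<subseteq> C" and "C \<noteq> {}" and "\<forall>K\<in>C. h_ideal A K"
  shows "h_ideal A (\<Union>C)"
proof (rule h_idealI)
  show "\<Union>C \<subseteq> car A {1}" using assms(3) h_ideal_subset by blast
next
  fix X b c d
  assume X: "finite X" and b: "b \<in> car A X" and d: "d \<in> car A X" and c: "\<And>x. x \<in> X \<Longrightarrow> c x \<in> \<Union>C"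
  obtain K where K: "K \<in> C" "\<forall>x\<in>X. c x \<in> K"
    using chain_finite_bound[OF X assms(1,2)] c by blast
  have "hcomb A X b c d \<in> K"
    using h_ideal_hcomb[of A K X b d c] K assms(3) X b d by blast
  then show "hcomb A X b c d \<in> \<Union>C" using K(1) by blast
qed

text \<open>An h-ideal maximal among those avoiding the powers of \<open>a\<close> is prime: if \<open>u v \<in> p\<close>
  with \<open>u, v \<notin> p\<close>, maximality puts a power \<open>a\<^sup>n\<close> into \<open>p : u\<close>, and then \<open>u \<in> p : a\<^sup>n\<close>,
  which must again equal \<open>p\<close>.\<close>

lemma prime_h_if_maximal_avoiding_powers:
  assumes g: "gring A" and p: "h_ideal A p" and a: "a \<in> car A {1}"
    and avoid: "\<forall>n>0. pw A a n \<notin> p"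
    and max: "\<And>K. h_ideal A K \<Longrightarrow> p \<subseteq> K \<Longrightarrow> \<forall>n>0. pw A a n \<notin> K \<Longrightarrow> K = p"
  shows "prime_h A p"
  unfolding prime_h_def
proof (intro conjI ballI impI)
  show "uni A \<notin> p"
  proof
    assume "uni A \<in> p"
    then have "mult1 A a (uni A) \<in> p" using h_ideal_mult1_closed[OF g p _ a] by blast
    then show False using avoid[rule_format, of 1] by (simp add: One_nat_def)
  qed
next
  fix u v assume u: "u \<in> car A {1}" and v: "v \<in> car A {1}" and uv: "mult1 A u v \<in> p"
  show "u \<in> p \<or> v \<in> p"
  proof (rule disjCI)
    assume "v \<notin> p"
    then have "colon A p u \<noteq> p" using v uv unfolding colon_def by auto
    then obtain n where n: "n > 0" "pw A a n \<in> colon A p u"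
      using max[OF h_ideal_colon[OF g p u] subset_colon[OF g p u]] by blast
    have an: "pw A a n \<in> car A {1}" by (rule pw_closed[OF g a])
    have "colon A p (pw A a n) = p"
    proof (rule max[OF h_ideal_colon[OF g p an] subset_colon[OF g p an]], intro allI impI)
      fix k :: nat assume "k > 0"
      then have "pw A a (n + k) \<notin> p" using avoid by simp
      then show "pw A a k \<notin> colon A p (pw A a n)" unfolding colon_def by (simp add: pw_add[OF g a])
    qed
    moreover have "u \<in> colon A p (pw A a n)"
      using n(2) u an gring_mult1_commute[OF g u an] unfolding colon_def by auto
    ultimately show "u \<in> p" by simp
  qed
qed (rule p)

lemma prime_h_avoiding_powers:
  assumes g: "gring A" and I: "h_ideal A I" and a: "a \<in> car A {1}" and avoid: "\<forall>n>0. pw A a n \<notin> I"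
  obtains p where "prime_h A p" and "I \<subseteq> p" and "a \<notin> p"
proof -
  define F where "F = {K. h_ideal A K \<and> I \<subseteq> K \<and> (\<forall>n>0. pw A a n \<notin> K)}"
  have "\<forall>C\<in>chains F. \<exists>U\<in>F. \<forall>K\<in>C. K \<subseteq> U"
  proof
    fix C assume C: "C \<in> chains F"
    show "\<exists>U\<in>F. \<forall>K\<in>C. K \<subseteq> U"
    proof (cases "C = {}")
      case True
      then show ?thesis using I avoid unfolding F_def by auto
    next
      case False
      have chain: "chain\<^sub>\<subseteq> C" and CF: "C \<subseteq> F" using C unfolding chains_def by auto
      have "h_ideal A (\<Union>C)" using h_ideal_Union_chain[OF chain False] CF unfolding F_def by blast
      moreover have "I \<subseteq> \<Union>C" using CF False unfolding F_def by blast
      moreover have "\<forall>n>0. pw A a n \<notin> \<Union>C" using CF unfolding F_def by blast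
      ultimately have "\<Union>C \<in> F" unfolding F_def by simp
      then show ?thesis by blast
    qed
  qed
  from Zorn_Lemma2[OF this] obtain p where pF: "p \<in> F" and max: "\<forall>K\<in>F. p \<subseteq> K \<longrightarrow> K = p"
    by blast
  have p: "h_ideal A p" and Ip: "I \<subseteq> p" and avoid_p: "\<forall>n>0. pw A a n \<notin> p"
    using pF unfolding F_def by auto
  have "prime_h A p"
  proof (rule prime_h_if_maximal_avoiding_powers[OF g p a avoid_p])
    fix K assume "h_ideal A K" "p \<subseteq> K" "\<forall>n>0. pw A a n \<notin> K"
    then show "K = p" using max Ip unfolding F_def by blast
  qed
  moreover have "a \<notin> p"
    using avoid_p pw_1[OF g a] by (metis zero_less_one)
  ultimately show ?thesis using Ip that by blast
qed

section \<open>Irreducibility of \<open>V(I)\<close>\<close>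

lemma Vz_subset_Vz_singleton_imp_rad:
  assumes g: "gring A" and I: "h_ideal A I" and a: "a \<in> car A {1}" and V: "Vz A I \<subseteq> Vz A {a}"
  shows "a \<in> rad A I"
proof (rule ccontr)
  assume "a \<notin> rad A I"
  then have "\<forall>n>0. pw A a n \<notin> I" using a unfolding rad_def by blast
  then obtain p where "prime_h A p" "I \<subseteq> p" "a \<notin> p"
    using prime_h_avoiding_powers[OF g I a] by blast
  then show False using V unfolding Vz_def spec_def by auto
qed

lemma zirreducible_Vz_if_prime_h:
  assumes "prime_h A I"
  shows "zirreducible A (Vz A I)"
  unfolding zirreducible_def
proof (intro conjI allI impI)
  have I: "I \<in> Vz A I" using assms unfolding Vz_def spec_def by auto
  then show "Vz A I \<noteq> {}" by auto
  show "Vz A I \<subseteq> spec A" unfolding Vz_def by auto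
  fix F1 F2 assume F: "zclosed A F1 \<and> zclosed A F2 \<and> Vz A I \<subseteq> F1 \<union> F2"
  then obtain J1 J2 where J: "F1 = Vz A J1" "F2 = Vz A J2" unfolding zclosed_def by auto
  have "I \<in> F1 \<or> I \<in> F2" using F I by auto
  then have "J1 \<subseteq> I \<or> J2 \<subseteq> I" using J unfolding Vz_def by auto
  then show "Vz A I \<subseteq> F1 \<or> Vz A I \<subseteq> F2" using J unfolding Vz_def by auto
qed

lemma Vz_subset_Vz_union:
  assumes a: "a \<in> car A {1}" and b: "b \<in> car A {1}" and ab: "mult1 A a b \<in> I"
  shows "Vz A I \<subseteq> Vz A {a} \<union> Vz A {b}"
proof
  fix p assume p: "p \<in> Vz A I"
  then have "prime_h A p" "I \<subseteq> p" unfolding Vz_def spec_def by auto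
  then have "a \<in> p \<or> b \<in> p" using ab a b unfolding prime_h_def by blast
  then show "p \<in> Vz A {a} \<union> Vz A {b}" using p unfolding Vz_def by auto
qed

theorem lemma4p3p6:
  fixes A :: "('a,'b) gring_scheme" and I :: "'a set"
  assumes "gring A" and "h_ideal A I" and "rad A I = I"
  shows "zirreducible A (Vz A I) \<longleftrightarrow> prime_h A I"
proof
  assume irr: "zirreducible A (Vz A I)"
  then obtain q where "q \<in> Vz A I" unfolding zirreducible_def by auto
  then have "uni A \<notin> I" unfolding Vz_def spec_def prime_h_def by auto
  moreover have "a \<in> I \<or> b \<in> I"
    if a: "a \<in> car A {1}" and b: "b \<in> car A {1}" and ab: "mult1 A a b \<in> I" for a b
  proof -
    have "Vz A I \<subseteq> Vz A {a} \<union> Vz A {b}"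
      by (rule Vz_subset_Vz_union[OF a b ab])
    moreover have "zclosed A (Vz A {a})" "zclosed A (Vz A {b})"
      using a b unfolding zclosed_def by auto
    ultimately have "Vz A I \<subseteq> Vz A {a} \<or> Vz A I \<subseteq> Vz A {b}"
      using irr unfolding zirreducible_def by blast
    then show ?thesis
      using Vz_subset_Vz_singleton_imp_rad[OF assms(1,2)] a b assms(3) by blast
  qed
  ultimately show "prime_h A I" unfolding prime_h_def using assms(2) by blast
qed (rule zirreducible_Vz_if_prime_h)

end
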